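(* Let $f$ be a holomorphic quadratic self-map of $\mathbb{P}^2$ with an invariant line $\ell$ ($f(\ell)\subset\ell$), all of whose fixed points are isolated and simple. Then any three of the four fixed points of $f$ not lying on $\ell$ are not collinear.
   Context: A holomorphic quadratic self-map of $\mathbb{P}^2$ is given by three quadratic homogeneous polynomials without common nontrivial zeros; such a map with invariant line $\ell$ and isolated simple fixed points has exactly seven fixed points, three on $\ell$ and four off $\ell$. *)

theory Defs
  imports "HOL-Analysis.Analysis"
begin

text \<open>Homogeneous coordinates on P^2: nonzero vectors in complex^3.
A quadratic self-map is given by three quadratic forms
F_k(v) = sum_{i,j} C k i j * v_i * v_j.\<close>

definition quad_map :: "(3 \<Rightarrow> 3 \<Rightarrow> 3 \<Rightarrow> complex) \<Rightarrow> complex^3 \<Rightarrow> complex^3" where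
  "quad_map C v = (\<chi> k. \<Sum>i\<in>UNIV. \<Sum>j\<in>UNIV. C k i j * v$i * v$j)"

text \<open>Holomorphic self-map of P^2: no common nontrivial zero.\<close>
definition holo_quad :: "(3 \<Rightarrow> 3 \<Rightarrow> 3 \<Rightarrow> complex) \<Rightarrow> bool" where
  "holo_quad C \<longleftrightarrow> (\<forall>v::complex^3. v \<noteq> 0 \<longrightarrow> quad_map C v \<noteq> 0)"

definition proj_eq :: "complex^3 \<Rightarrow> complex^3 \<Rightarrow> bool" where
  "proj_eq v w \<longleftrightarrow> (\<exists>c. c \<noteq> 0 \<and> w = c *s v)"

definition is_fixed :: "(3 \<Rightarrow> 3 \<Rightarrow> 3 \<Rightarrow> complex) \<Rightarrow> complex^3 \<Rightarrow> bool" where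
  "is_fixed C v \<longleftrightarrow> v \<noteq> 0 \<and> (\<exists>\<mu>. quad_map C v = \<mu> *s v)"

text \<open>Isolated simple fixed point (multiplicity one): 1 is not an eigenvalue of df at [v].
In homogeneous coordinates, with F v = mu v, this means mu is not an eigenvalue of DF(v)
(DF(v) v = 2 mu v, and the other eigenvalues of DF(v)/mu are those of df).\<close>
definition simple_fixed :: "(3 \<Rightarrow> 3 \<Rightarrow> 3 \<Rightarrow> complex) \<Rightarrow> complex^3 \<Rightarrow> bool" where
  "simple_fixed C v \<longleftrightarrow> is_fixed C v \<and>
     (\<exists>L \<mu>. (quad_map C has_derivative L) (at v) \<and> quad_map C v = \<mu> *s v \<and>
            (\<forall>w. L w = \<mu> *s w \<longrightarrow> w = 0))"

definition lin_form :: "complex^3 \<Rightarrow> complex^3 \<Rightarrow> complex" where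
  "lin_form a v = (\<Sum>i\<in>UNIV. a$i * v$i)"

definition invariant_line :: "(3 \<Rightarrow> 3 \<Rightarrow> 3 \<Rightarrow> complex) \<Rightarrow> complex^3 \<Rightarrow> bool" where
  "invariant_line C a \<longleftrightarrow> a \<noteq> 0 \<and>
     (\<forall>v. v \<noteq> 0 \<longrightarrow> lin_form a v = 0 \<longrightarrow> lin_form a (quad_map C v) = 0)"

definition proj_collinear :: "complex^3 \<Rightarrow> complex^3 \<Rightarrow> complex^3 \<Rightarrow> bool" where
  "proj_collinear p q r \<longleftrightarrow>
     (\<exists>a. a \<noteq> 0 \<and> lin_form a p = 0 \<and> lin_form a q = 0 \<and> lin_form a r = 0)"

end

theory Submission
  imports Defs
begin

text \<open>Suppose three fixed points p, q, r off the invariant line \<open>\<ell>\<close> lie on a line \<open>m\<close>.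
Writing points of \<open>m\<close> as \<open>x p + y q\<close>, the fixedness of r forces the polarization
\<open>B(p,q)\<close> of F into the plane spanned by p and q, so \<open>m\<close> is F-invariant, and on \<open>m\<close> the
fixed-point condition becomes \<open>x y \<lambda>(x,y) = 0\<close> with \<open>\<lambda>(x,y) = (\<mu>\<^sub>p - d\<^sub>2) x + (d\<^sub>1 - \<mu>\<^sub>q) y\<close>,
where \<open>F p = \<mu>\<^sub>p p\<close>, \<open>F q = \<mu>\<^sub>q q\<close> and \<open>B(p,q) = d\<^sub>1 p + d\<^sub>2 q\<close>. Both r and the
point \<open>m \<inter> \<ell>\<close> (which is fixed, as \<open>m\<close> and \<open>\<ell>\<close> are invariant) are zeros of \<open>\<lambda>\<close>, and
they are distinct, so \<open>\<lambda> = 0\<close>: F is a scalar multiple of the identity on \<open>m\<close>. Then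
\<open>B(p,q) = \<mu>\<^sub>q p + \<mu>\<^sub>p q\<close>, and \<open>\<mu>\<^sub>q p - \<mu>\<^sub>p q\<close> is an eigenvector of \<open>DF(p) = B(p,-)\<close>
with eigenvalue \<open>\<mu>\<^sub>p\<close>, so p is not a simple fixed point.\<close>

definition quad_polar :: "(3 \<Rightarrow> 3 \<Rightarrow> 3 \<Rightarrow> complex) \<Rightarrow> complex^3 \<Rightarrow> complex^3 \<Rightarrow> complex^3" where
  "quad_polar C u v = (\<chi> k. \<Sum>i\<in>UNIV. \<Sum>j\<in>UNIV. C k i j * (u$i * v$j + v$i * u$j))"

lemma quad_map_lincomb:
  "quad_map C (x *s u + y *s v) =
     (x * x) *s quad_map C u + (x * y) *s quad_polar C u v + (y * y) *s quad_map C v"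
  by (simp add: vec_eq_iff quad_map_def quad_polar_def sum_3 algebra_simps)

lemma quad_polar_lincomb_right:
  "quad_polar C u (x *s v + y *s w) = x *s quad_polar C u v + y *s quad_polar C u w"
  by (simp add: vec_eq_iff quad_polar_def sum_3 algebra_simps)

lemma quad_polar_self: "quad_polar C u u = 2 *s quad_map C u"
  by (simp add: vec_eq_iff quad_polar_def quad_map_def sum_3 algebra_simps)

lemma lin_form_lincomb: "lin_form a (x *s u + y *s v) = x * lin_form a u + y * lin_form a v"
  by (simp add: lin_form_def sum_3 algebra_simps)

lemma scaleR_eq_vector_smult: "(t::real) *\<^sub>R (v::complex^3) = complex_of_real t *s v"
  unfolding vec_eq_iff vector_scaleR_component vector_smult_component
  by (simp add: scaleR_conv_of_real)

lemma quad_map_derivative_eq: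
  assumes "(quad_map C has_derivative L) (at p)"
  shows "L w = quad_polar C p w"
proof -
  let ?line = "\<lambda>t::real. p + t *\<^sub>R w"
  have line: "(?line has_derivative (\<lambda>t. t *\<^sub>R w)) (at 0)"
    by (auto intro!: derivative_eq_intros)
  have "(quad_map C has_derivative L) (at (p + 0 *\<^sub>R w))"
    using assms by simp
  from has_derivative_compose[OF line this]
  have chain: "((quad_map C \<circ> ?line) has_derivative (\<lambda>t. L (t *\<^sub>R w))) (at 0)"
    by (simp add: o_def)
  have "quad_map C \<circ> ?line =
          (\<lambda>t. quad_map C p + t *\<^sub>R quad_polar C p w + t\<^sup>2 *\<^sub>R quad_map C w)"
  proof
    fix t :: real
    have "(quad_map C \<circ> ?line) t = quad_map C (1 *s p + complex_of_real t *s w)"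
      by (simp add: scaleR_eq_vector_smult)
    also have "\<dots> = quad_map C p + complex_of_real t *s quad_polar C p w +
                       (complex_of_real t * complex_of_real t) *s quad_map C w"
      unfolding quad_map_lincomb by simp
    finally show "(quad_map C \<circ> ?line) t = quad_map C p + t *\<^sub>R quad_polar C p w + t\<^sup>2 *\<^sub>R quad_map C w"
      by (simp add: scaleR_eq_vector_smult power2_eq_square)
  qed
  then have "((quad_map C \<circ> ?line) has_derivative (\<lambda>t. t *\<^sub>R quad_polar C p w)) (at 0)"
    by (auto intro!: derivative_eq_intros)
  with chain have "(\<lambda>t. L (t *\<^sub>R w)) = (\<lambda>t. t *\<^sub>R quad_polar C p w)"
    by (rule has_derivative_unique)
  then show ?thesis
    by (metis scaleR_one)
qed

lemma lincomb_eq_zero_of_not_proj_eq: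
  assumes "u \<noteq> 0" "v \<noteq> 0" "\<not> proj_eq u v" "x *s u + y *s v = 0"
  shows "x = 0 \<and> y = 0"
proof (rule ccontr)
  assume nontrivial: "\<not> (x = 0 \<and> y = 0)"
  have "y \<noteq> 0"
  proof
    assume "y = 0"
    with assms(4) have "x *s u = 0" by simp
    with assms(1) nontrivial \<open>y = 0\<close> show False
      by (simp add: vec_eq_iff)
  qed
  moreover have "x \<noteq> 0"
  proof
    assume "x = 0"
    with assms(2,4) \<open>y \<noteq> 0\<close> show False by (simp add: vec_eq_iff)
  qed
  moreover have "v = (- x / y) *s u"
    using assms(4) \<open>y \<noteq> 0\<close> by (simp add: vec_eq_iff field_simps) (metis add_eq_0_iff)
  ultimately show False
    using assms(3) unfolding proj_eq_def by (metis divide_eq_0_iff neg_equal_0_iff_equal)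
qed

lemma linear_dependence_of_proj_collinear:
  assumes "proj_collinear p q r"
  shows "\<exists>x y z. x *s p + y *s q + z *s r = 0 \<and> (x \<noteq> 0 \<or> y \<noteq> 0 \<or> z \<noteq> 0)"
proof -
  obtain b where b: "b \<noteq> 0" "lin_form b p = 0" "lin_form b q = 0" "lin_form b r = 0"
    using assms unfolding proj_collinear_def by blast
  define R :: "complex^3^3" where "R = (\<chi> i. if i = 1 then p else if i = 2 then q else r)"
  have "R *v b = 0"
    using b(2-4) unfolding R_def lin_form_def
    by (simp add: vec_eq_iff matrix_vector_mult_def sum_3 mult.commute)
  with b(1) have "\<not> (\<exists>B. B ** R = mat 1)"
    using matrix_left_invertible_ker by blast
  then have "\<not> (\<exists>B. R ** B = mat 1)"
    by (metis invertible_left_inverse invertible_right_inverse)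
  then obtain c where c: "(\<Sum>i\<in>UNIV. c i *s row i R) = 0" and "\<exists>i. c i \<noteq> 0"
    unfolding matrix_right_invertible_independent_rows by blast
  then have "c 1 *s p + c 2 *s q + c 3 *s r = 0" "c 1 \<noteq> 0 \<or> c 2 \<noteq> 0 \<or> c 3 \<noteq> 0"
    by (simp_all add: sum_3 R_def row_def) (metis exhaust_3)
  then show ?thesis by blast
qed

lemma proj_collinear_lincomb:
  assumes "proj_collinear p q r" "p \<noteq> 0" "q \<noteq> 0" "r \<noteq> 0"
    and "\<not> proj_eq p q" "\<not> proj_eq p r" "\<not> proj_eq q r"
  obtains x y where "x \<noteq> 0" "y \<noteq> 0" "r = x *s p + y *s q"
proof -
  obtain c1 c2 c3 where c: "c1 *s p + c2 *s q + c3 *s r = 0" and "c1 \<noteq> 0 \<or> c2 \<noteq> 0 \<or> c3 \<noteq> 0"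
    using linear_dependence_of_proj_collinear[OF assms(1)] by blast
  have "c3 \<noteq> 0"
    using c lincomb_eq_zero_of_not_proj_eq[OF assms(2,3,5), of c1 c2] \<open>c1 \<noteq> 0 \<or> _\<close> by auto
  moreover have "c1 \<noteq> 0"
    using c lincomb_eq_zero_of_not_proj_eq[OF assms(3,4,7), of c2 c3] \<open>c3 \<noteq> 0\<close> by auto
  moreover have "c2 \<noteq> 0"
    using c lincomb_eq_zero_of_not_proj_eq[OF assms(2,4,6), of c1 c3] \<open>c3 \<noteq> 0\<close> by auto
  ultimately have "- c1 / c3 \<noteq> 0" "- c2 / c3 \<noteq> 0"
    by simp_all
  moreover have "r = (- c1 / c3) *s p + (- c2 / c3) *s q"
    using c \<open>c3 \<noteq> 0\<close> by (simp add: vec_eq_iff field_simps) (metis add_eq_0_iff)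
  ultimately show ?thesis
    by (rule that)
qed

lemma quad_polar_in_span_of_fixed_lincomb:
  assumes "quad_map C p = mp *s p" "quad_map C q = mq *s q"
    and "quad_map C (x *s p + y *s q) = m *s (x *s p + y *s q)" "x \<noteq> 0" "y \<noteq> 0"
  obtains d1 d2 where "quad_polar C p q = d1 *s p + d2 *s q"
    and "(mp - d2) * x + (d1 - mq) * y = 0"
proof
  define d1 where "d1 = (m - x * mp) / y"
  define d2 where "d2 = (m - y * mq) / x"
  have "(x * x) *s (mp *s p) + (x * y) *s quad_polar C p q + (y * y) *s (mq *s q) =
          m *s (x *s p + y *s q)"
    using assms(1-3) by (simp add: quad_map_lincomb)
  then show "quad_polar C p q = d1 *s p + d2 *s q"
    using assms(4,5) by (simp add: vec_eq_iff d1_def d2_def field_simps)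
  show "(mp - d2) * x + (d1 - mq) * y = 0"
    using assms(4,5) by (simp add: d1_def d2_def field_simps)
qed

lemma polar_coeffs_relation_at_invariant_line:
  assumes "invariant_line C a"
    and "quad_map C p = mp *s p" "quad_map C q = mq *s q"
    and "quad_polar C p q = d1 *s p + d2 *s q"
    and "p \<noteq> 0" "q \<noteq> 0" "\<not> proj_eq p q" "lin_form a p \<noteq> 0" "lin_form a q \<noteq> 0"
  shows "(mp - d2) * lin_form a q + (d1 - mq) * (- lin_form a p) = 0"
proof -
  let ?A = "lin_form a q" and ?P = "lin_form a p"
  let ?w = "?A *s p + (- ?P) *s q"
  have "?w \<noteq> 0"
    using lincomb_eq_zero_of_not_proj_eq[OF assms(5-7)] assms(9) by blast
  moreover have "lin_form a ?w = 0"
    unfolding lin_form_lincomb by simp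
  ultimately have invariant: "lin_form a (quad_map C ?w) = 0"
    using assms(1) unfolding invariant_line_def by blast
  have "quad_map C ?w = (?A * ?A * mp - ?A * ?P * d1) *s p + (?P * ?P * mq - ?A * ?P * d2) *s q"
    unfolding quad_map_lincomb assms(2-4) by (simp add: vec_eq_iff algebra_simps)
  then have "lin_form a (quad_map C ?w) =
               ?A * ?P * ((mp - d2) * ?A + (d1 - mq) * (- ?P))"
    by (simp only: lin_form_lincomb) (simp add: algebra_simps)
  with invariant assms(8,9) show ?thesis
    by simp
qed

lemma linear_form_eq_zero:
  fixes s t x y u v :: complex
  assumes "s * x + t * y = 0" "s * u + t * v = 0" "x * v - y * u \<noteq> 0"
  shows "s = 0 \<and> t = 0"
proof -
  have "s * (x * v - y * u) = (s * x + t * y) * v - (s * u + t * v) * y"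
    and "t * (x * v - y * u) = (s * u + t * v) * x - (s * x + t * y) * u"
    by (simp_all add: algebra_simps)
  then have "s * (x * v - y * u) = 0" "t * (x * v - y * u) = 0"
    by (simp_all only: assms(1,2) mult_zero_left diff_self)
  with assms(3) show ?thesis by simp
qed

lemma not_simple_fixed_of_quad_polar_eq:
  assumes "quad_map C p = mp *s p" "quad_map C q = mq *s q" "mp \<noteq> 0"
    and "p \<noteq> 0" "q \<noteq> 0" "\<not> proj_eq p q"
    and "quad_polar C p q = mq *s p + mp *s q"
  shows "\<not> simple_fixed C p"
proof
  assume "simple_fixed C p"
  then obtain L \<mu> where L: "(quad_map C has_derivative L) (at p)"
    and \<mu>: "quad_map C p = \<mu> *s p" and simple: "\<forall>w. L w = \<mu> *s w \<longrightarrow> w = 0"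
    unfolding simple_fixed_def by blast
  obtain i where "p $ i \<noteq> 0"
    using \<open>p \<noteq> 0\<close> by (metis vec_eq_iff zero_index)
  with \<mu> assms(1) have "\<mu> = mp"
    by (metis mult_cancel_right vector_smult_component)
  define w where "w = mq *s p + (- mp) *s q"
  have "w \<noteq> 0"
    using lincomb_eq_zero_of_not_proj_eq[OF assms(4-6), of mq "- mp"] assms(3) w_def by auto
  have "L w = mq *s quad_polar C p p + (- mp) *s quad_polar C p q"
    unfolding quad_map_derivative_eq[OF L] w_def by (rule quad_polar_lincomb_right)
  also have "\<dots> = mp *s w"
    unfolding quad_polar_self assms(1,7) w_def by (simp add: vec_eq_iff algebra_simps)
  finally have "L w = \<mu> *s w"
    using \<open>\<mu> = mp\<close> by simp
  with simple \<open>w \<noteq> 0\<close> show False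
    by blast
qed

theorem mainTheorem7:
  fixes C :: "3 \<Rightarrow> 3 \<Rightarrow> 3 \<Rightarrow> complex" and a p q r :: "complex^3"
  assumes "holo_quad C"
    and "invariant_line C a"
    and "\<forall>v. is_fixed C v \<longrightarrow> simple_fixed C v"
    and "is_fixed C p" and "is_fixed C q" and "is_fixed C r"
    and "lin_form a p \<noteq> 0" and "lin_form a q \<noteq> 0" and "lin_form a r \<noteq> 0"
    and "\<not> proj_eq p q" and "\<not> proj_eq p r" and "\<not> proj_eq q r"
  shows "\<not> proj_collinear p q r"
proof
  assume "proj_collinear p q r"
  obtain mp mq mr where mp: "quad_map C p = mp *s p" and mq: "quad_map C q = mq *s q"
    and mr: "quad_map C r = mr *s r" and "p \<noteq> 0" "q \<noteq> 0" "r \<noteq> 0"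
    using assms(4-6) unfolding is_fixed_def by blast
  then obtain x y where "x \<noteq> 0" "y \<noteq> 0" and r: "r = x *s p + y *s q"
    using proj_collinear_lincomb \<open>proj_collinear p q r\<close> assms(10-12) by metis
  then obtain d1 d2 where polar: "quad_polar C p q = d1 *s p + d2 *s q"
    and at_r: "(mp - d2) * x + (d1 - mq) * y = 0"
    using quad_polar_in_span_of_fixed_lincomb[OF mp mq] mr by metis
  have at_meet: "(mp - d2) * lin_form a q + (d1 - mq) * (- lin_form a p) = 0"
    using polar_coeffs_relation_at_invariant_line[OF assms(2) mp mq polar] \<open>p \<noteq> 0\<close> \<open>q \<noteq> 0\<close>
      assms(7,8,10) by blast
  have "x * (- lin_form a p) - y * lin_form a q = - lin_form a r"
    unfolding r lin_form_lincomb by simp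
  with assms(9) have "x * (- lin_form a p) - y * lin_form a q \<noteq> 0"
    by simp
  from linear_form_eq_zero[OF at_r at_meet this] have "mp = d2" "d1 = mq"
    by simp_all
  moreover have "mp \<noteq> 0"
    using assms(1) \<open>p \<noteq> 0\<close> mp unfolding holo_quad_def by force
  ultimately have "\<not> simple_fixed C p"
    using not_simple_fixed_of_quad_polar_eq[OF mp mq _ \<open>p \<noteq> 0\<close> \<open>q \<noteq> 0\<close> assms(10)] polar by simp
  with assms(3,4) show False by blast
qed

end
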